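(* (i) Let $q$ be a power of an odd prime and let $\mathfrak{C}/\mathbb{F}_q$ be the genus $2$ hyperelliptic curve $y^2=x^5+x^3+tx$ with $t\in\mathbb{F}_q\setminus\{0,1/4,9/100\}$. If $4\mid q-1$ and $t$ has a fourth root $t^{1/4}\in\mathbb{F}_q$, then $\mathrm{Aut}(\mathfrak{C}/\mathbb{F}_q)\simeq D_8$. (ii) Let $q$ be a power of an odd prime $p\neq 3$ and let $\mathfrak{C}/\mathbb{F}_q$ be the genus $2$ hyperelliptic curve $y^2=x^6+x^3+t$ with $t\in\mathbb{F}_q\setminus\{0,1/4,-1/50\}$. If $3\mid q-1$ and $t$ has a sixth root $t^{1/6}\in\mathbb{F}_q$, then $\mathrm{Aut}(\mathfrak{C}/\mathbb{F}_q)\simeq D_{12}$.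
   Context: For a genus $2$ curve $\mathfrak{C}:y^2=f(x)$ over $\mathbb{F}_q$ ($q$ odd), automorphisms of $\mathfrak{C}$ over $\overline{\mathbb{F}}_q$ correspond to matrices $M=\begin{pmatrix}a&b\\c&d\end{pmatrix}\in\mathrm{GL}_2(\overline{\mathbb{F}}_q)$ acting by $x\mapsto \frac{ax+b}{cx+d}$, $y\mapsto \frac{(ad-bc)y}{(cx+d)^3}$ (and preserving the curve). $\mathrm{Aut}(\mathfrak{C})$ denotes the full automorphism group over $\overline{\mathbb{F}}_q$ (including the hyperelliptic involution $y\mapsto -y$, corresponding to $-I$), and $\mathrm{Aut}(\mathfrak{C}/\mathbb{F}_q)$ its subgroup of automorphisms defined over $\mathbb{F}_q$, i.e. whose matrix has entries in $\mathbb{F}_q$. $D_n$ denotes the dihedral group of order $n$. *)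

theory Defs
  imports "HOL-Library.Cardinality" "HOL-Algebra.Group" "HOL-Computational_Algebra.Polynomial"
begin

text \<open>A 2x2 matrix (a b; c d) is represented as the tuple (a, b, c, d).\<close>
type_synonym 'a mat2 = "'a \<times> 'a \<times> 'a \<times> 'a"

fun mat2_det :: "'a::comm_ring_1 mat2 \<Rightarrow> 'a" where
  "mat2_det (a, b, c, d) = a * d - b * c"

fun mat2_mult :: "'a::comm_ring_1 mat2 \<Rightarrow> 'a mat2 \<Rightarrow> 'a mat2" where
  "mat2_mult (a, b, c, d) (a', b', c', d') =
     (a * a' + b * c', a * b' + b * d', c * a' + d * c', c * b' + d * d')"

text \<open>The matrix M = (a b; c d) defines an automorphism
  x \<mapsto> (ax+b)/(cx+d), y \<mapsto> (ad-bc) y/(cx+d)^3 of the genus 2 curve y^2 = f(x)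
  (deg f \<le> 6) iff  (cx+d)^6 f((ax+b)/(cx+d)) = (ad-bc)^2 f(x) as polynomials, i.e.
  sum_i f_i (ax+b)^i (cx+d)^(6-i) = (ad-bc)^2 f(x).\<close>
fun preserves_curve :: "'a::field poly \<Rightarrow> 'a mat2 \<Rightarrow> bool" where
  "preserves_curve f (a, b, c, d) =
     ((\<Sum>i\<le>6. smult (coeff f i) ([:b, a:] ^ i * [:d, c:] ^ (6 - i)))
        = smult ((a * d - b * c) ^ 2) f)"

definition aut_group :: "'a::field poly \<Rightarrow> 'a mat2 monoid" where
  "aut_group f = \<lparr> carrier = {M. mat2_det M \<noteq> 0 \<and> preserves_curve f M},
                  monoid.mult = mat2_mult, one = (1, 0, 0, 1) \<rparr>"

text \<open>Dihedral group of order n (n even): elements (k, s) stand for r^k s^s,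
  with r a rotation of order n/2 and s a reflection.\<close>
definition dihedral_group :: "nat \<Rightarrow> (nat \<times> bool) monoid" where
  "dihedral_group n = \<lparr> carrier = {(k, s). k < n div 2},
     monoid.mult = (\<lambda>(k1, s1) (k2, s2).
              ((if s1 then k1 + (n div 2) - k2 else k1 + k2) mod (n div 2), s1 \<noteq> s2)),
     one = (0, False) \<rparr>"

end

theory Submission
  imports Defs "HOL-Number_Theory.Residues"
begin

text \<open>Comparing coefficients shows that M is diagonal or
  antidiagonal: if a, c and d are all nonzero, writing a = r c and b = l d turns the coefficient
  identities into polynomial equations in r, l and t, and eliminating l leaves
  (4t - 1)(100t - 9) = 0, resp. (4t - 1)(50t + 1) = 0. The remaining automorphisms are
  diag(a, 1/a) with a^m = 1 and antidiag(b, 1/b) with b^m = t, for m = 4, resp. m = 6.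
  As m divides q - 1 there is a primitive m-th root of unity z, and with an m-th root rho of t
  the assignment r^k |-> diag(z^k, 1/z^k), r^k s |-> antidiag(z^k rho, 1/(z^k rho)) is an
  isomorphism from the dihedral group of order 2m.\<close>

section \<open>Characteristic of a finite field\<close>

lemma of_nat_neq_0_if_prime_not_dvd_card:
  assumes "prime p" and "\<not> p dvd CARD('a::{finite,field})"
  shows "(of_nat p :: 'a) \<noteq> 0"
proof
  assume "(of_nat p :: 'a) = 0"
  then have "CHAR('a) dvd p"
    by (simp add: of_nat_eq_0_iff_char_dvd)
  with assms(1) have "CHAR('a) = p"
    by (auto simp: prime_nat_iff)
  with CHAR_dvd_CARD[where 'a='a] assms(2) show False
    by simp
qed

lemma of_nat_coprime_not_both_0:
  assumes "coprime m n"
  shows "(of_nat m :: 'a::comm_ring_1) \<noteq> 0 \<or> (of_nat n :: 'a) \<noteq> 0"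
proof (rule ccontr)
  assume "\<not> ?thesis"
  then have "CHAR('a) dvd gcd m n"
    by (simp add: of_nat_eq_0_iff_char_dvd)
  with assms have "CHAR('a) = 1"
    by simp
  then show False
    using of_nat_CHAR[where 'a='a] by simp
qed

lemma five_or_three_neq_0: "(5::'a::comm_ring_1) \<noteq> 0 \<or> (3::'a) \<noteq> 0"
  using of_nat_coprime_not_both_0[where 'a='a, of 5 3]
  by (simp add: coprime_iff_gcd_eq_1 gcd_non_0_nat)

text \<open>Disposes of characteristic 5, in which several coefficient identities
  degenerate.\<close>
lemma five_three_contradiction:
  fixes u v w :: "'a::idom"
  assumes "5 * u = 0" and "3 * v + 5 * w = 0" and "u \<noteq> 0" and "v \<noteq> 0"
  shows False
  using five_or_three_neq_0[where 'a='a] assms by auto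

lemma nine_or_hundred_neq_0: "(9::'a::comm_ring_1) \<noteq> 0 \<or> (100::'a) \<noteq> 0"
  using of_nat_coprime_not_both_0[where 'a='a, of 9 100]
  by (simp add: coprime_iff_gcd_eq_1 gcd_non_0_nat)

text \<open>Since u / 0 = 0, the hypothesis t \<noteq> u / v says nothing about v t when v = 0.\<close>
lemma mult_neq_if_neq_divide:
  fixes t u v :: "'a::field"
  assumes "t \<noteq> u / v" and "u \<noteq> 0 \<or> v \<noteq> 0"
  shows "v * t \<noteq> u"
  using assms by (auto simp: field_simps)

section \<open>Roots of unity\<close>

text \<open>The library version finite_field_power_card_eq_same needs the class finite_field,
  which a type of class {finite, field} is not known to belong to.\<close>
lemma power_card_minus_1_eq_1:
  fixes x :: "'a::{finite,field}"
  assumes "x \<noteq> 0"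
  shows "x ^ (CARD('a) - 1) = 1"
proof -
  have "(\<Prod>y\<in>UNIV-{0}. x * y) = x ^ (CARD('a) - 1) * \<Prod>(UNIV-{0::'a})"
    by (simp add: prod.distrib card_Diff_singleton)
  moreover have "(\<Prod>y\<in>UNIV-{0}. x * y) = \<Prod>(UNIV-{0::'a})"
    by (rule prod.reindex_bij_witness[of _ "\<lambda>y. y / x" "\<lambda>y. x * y"]) (use assms in auto)
  moreover have "\<Prod>(UNIV-{0::'a}) \<noteq> 0"
    by (simp add: prod_zero_iff)
  ultimately show ?thesis
    by simp
qed

lemma finite_roots_of_unity: "0 < n \<Longrightarrow> finite {x::'a::field. x ^ n = 1}"
  and card_roots_of_unity_le: "0 < n \<Longrightarrow> card {x::'a::field. x ^ n = 1} \<le> n"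
proof -
  assume n: "0 < n"
  define p :: "'a poly" where "p = Polynomial.monom 1 n + [:-1:]"
  have roots: "{x. poly p x = 0} = {x. x ^ n = 1}"
    by (simp add: p_def poly_monom)
  have "degree p = n"
    using n unfolding p_def by (subst degree_add_eq_left) (simp_all add: degree_monom_eq)
  with n have "p \<noteq> 0"
    by auto
  show "finite {x::'a. x ^ n = 1}"
    using poly_roots_finite[OF \<open>p \<noteq> 0\<close>] roots by simp
  show "card {x::'a. x ^ n = 1} \<le> n"
    using card_poly_roots_bound[OF \<open>p \<noteq> 0\<close>] roots \<open>degree p = n\<close> by simp
qed

lemma exists_nonzero_power_neq_1:
  assumes "0 < h" and "h < CARD('a::{finite,field}) - 1"
  shows "\<exists>y::'a. y \<noteq> 0 \<and> y ^ h \<noteq> 1"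
proof (rule ccontr)
  assume "\<not> ?thesis"
  then have "UNIV - {0} \<subseteq> {y::'a. y ^ h = 1}"
    by auto
  then have "card (UNIV - {0::'a}) \<le> card {y::'a. y ^ h = 1}"
    by (rule card_mono[OF finite_roots_of_unity[OF assms(1)]])
  also have "\<dots> \<le> h"
    by (rule card_roots_of_unity_le[OF assms(1)])
  finally show False
    using assms(2) by (simp add: card_Diff_singleton)
qed

lemma exists_root_of_unity_not_root:
  assumes "m dvd CARD('a::{finite,field}) - 1" and "0 < d" and "d < m"
  shows "\<exists>u::'a. u ^ m = 1 \<and> u ^ d \<noteq> 1"
proof -
  obtain k where k: "CARD('a) - 1 = m * k"
    using assms(1) by blast
  have "card {0::'a, 1} \<le> CARD('a)"
    by (rule card_mono) simp_all
  with k have "0 < k"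
    by (cases k) auto
  with assms(2,3) k have "0 < d * k" and "d * k < CARD('a) - 1"
    by simp_all
  then obtain y :: 'a where "y \<noteq> 0" and y: "y ^ (d * k) \<noteq> 1"
    using exists_nonzero_power_neq_1 by blast
  have "(y ^ k) ^ m = 1"
    using power_card_minus_1_eq_1[OF \<open>y \<noteq> 0\<close>] k by (simp add: power_mult[symmetric] mult.commute)
  moreover have "(y ^ k) ^ d \<noteq> 1"
    using y by (simp add: power_mult[symmetric] mult.commute)
  ultimately show ?thesis
    by blast
qed

lemma exists_sqrt_minus_1:
  assumes "4 dvd CARD('a::{finite,field}) - 1"
  shows "\<exists>i::'a. i ^ 2 = -1"
proof -
  obtain u :: 'a where "u ^ 4 = 1" and "u ^ 2 \<noteq> 1"
    using exists_root_of_unity_not_root[OF assms, of 2] by auto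
  have "(u ^ 2 - 1) * (u ^ 2 + 1) = 0"
    using \<open>u ^ 4 = 1\<close> by Groebner_Basis.algebra
  with \<open>u ^ 2 \<noteq> 1\<close> have "u ^ 2 = -1"
    by (simp add: eq_neg_iff_add_eq_0)
  then show ?thesis ..
qed

lemma exists_root_x2_minus_x_plus_1:
  assumes "3 dvd CARD('a::{finite,field}) - 1"
  shows "\<exists>z::'a. z ^ 2 - z + 1 = 0"
proof -
  obtain u :: 'a where "u ^ 3 = 1" and "u \<noteq> 1"
    using exists_root_of_unity_not_root[OF assms, of 1] by auto
  have "(u - 1) * ((-u) ^ 2 - (-u) + 1) = 0"
    using \<open>u ^ 3 = 1\<close> by Groebner_Basis.algebra
  with \<open>u \<noteq> 1\<close> have "(-u) ^ 2 - (-u) + 1 = 0"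
    by simp
  then show ?thesis ..
qed

definition primitive_root_of_unity :: "nat \<Rightarrow> 'a::comm_ring_1 \<Rightarrow> bool" where
  "primitive_root_of_unity m z \<longleftrightarrow> z ^ m = 1 \<and> (\<forall>k. 0 < k \<longrightarrow> k < m \<longrightarrow> z ^ k \<noteq> 1)"

lemma power_gcd_eq_1:
  fixes z :: "'a::monoid_mult"
  assumes "z ^ m = 1" and "z ^ k = 1"
  shows "z ^ gcd k m = 1"
proof (cases "k = 0")
  case True
  with assms(1) show ?thesis
    by simp
next
  case False
  then obtain x y where "k * x = m * y + gcd k m"
    using bezout_nat by blast
  then have "z ^ (k * x) = z ^ (m * y) * z ^ gcd k m"
    by (simp add: power_add)
  with assms show ?thesis
    by (simp add: power_mult)
qed

lemma primitive_root_of_unityI: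
  assumes "z ^ m = 1" and "\<And>d. d dvd m \<Longrightarrow> d < m \<Longrightarrow> z ^ d \<noteq> 1"
  shows "primitive_root_of_unity m z"
  unfolding primitive_root_of_unity_def
proof (intro conjI assms(1) allI impI notI)
  fix k assume "0 < k" "k < m" "z ^ k = 1"
  then have "z ^ gcd k m = 1"
    using power_gcd_eq_1 assms(1) by blast
  moreover have "gcd k m < m"
    using \<open>0 < k\<close> \<open>k < m\<close> gcd_le1_nat[of k m] by linarith
  ultimately show False
    using assms(2) by auto
qed

lemma primitive_root_of_unity_4:
  fixes i :: "'a::field"
  assumes "(2::'a) \<noteq> 0" and "i ^ 2 = -1"
  shows "primitive_root_of_unity 4 i"
proof (rule primitive_root_of_unityI)
  have "(-1::'a) \<noteq> 1"
    using assms(1) by (metis add.inverse_neutral add_eq_0_iff2 one_add_one zero_neq_one)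
  show "i ^ 4 = 1"
    using assms(2) by Groebner_Basis.algebra
  fix d :: nat assume "d dvd 4" "d < 4"
  from \<open>d < 4\<close> have "d = 0 \<or> d = 1 \<or> d = 2 \<or> d = 3"
    by arith
  with \<open>d dvd 4\<close> have "d = 1 \<or> d = 2"
    by auto
  then show "i ^ d \<noteq> 1"
    using assms(2) \<open>-1 \<noteq> 1\<close> by auto
qed

lemma primitive_root_of_unity_6:
  fixes z :: "'a::field"
  assumes "(2::'a) \<noteq> 0" and "(3::'a) \<noteq> 0" and "z ^ 2 - z + 1 = 0"
  shows "primitive_root_of_unity 6 z"
proof (rule primitive_root_of_unityI)
  have "z ^ 3 = -1"
    using assms(3) by Groebner_Basis.algebra
  then show "z ^ 6 = 1"
    by Groebner_Basis.algebra
  have "z \<noteq> 1"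
    using assms(3) by auto
  moreover have "z ^ 2 \<noteq> 1"
  proof
    assume "z ^ 2 = 1"
    with assms(3) have "z = 2"
      by Groebner_Basis.algebra
    with assms(2,3) show False
      by simp
  qed
  moreover have "z ^ 3 \<noteq> 1"
    using \<open>z ^ 3 = -1\<close> assms(1) by (metis add.inverse_neutral add_eq_0_iff2 one_add_one zero_neq_one)
  moreover fix d :: nat assume "d dvd 6" "d < 6"
  from \<open>d < 6\<close> have "d = 0 \<or> d = 1 \<or> d = 2 \<or> d = 3 \<or> d = 4 \<or> d = 5"
    by arith
  with \<open>d dvd 6\<close> have "d = 1 \<or> d = 2 \<or> d = 3"
    by auto
  ultimately show "z ^ d \<noteq> 1"
    by auto
qed

lemma primitive_root_of_unity_power_inj:
  fixes z :: "'a::field"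
  assumes "primitive_root_of_unity m z"
  shows "inj_on (\<lambda>k. z ^ k) {..<m}"
proof -
  have neq: "z ^ i \<noteq> z ^ j" if "i < j" and "j < m" for i j
  proof
    assume "z ^ i = z ^ j"
    have "z \<noteq> 0"
      using assms that by (auto simp: primitive_root_of_unity_def power_0_left)
    have "z ^ j = z ^ i * z ^ (j - i)"
      using that by (simp flip: power_add)
    with \<open>z ^ i = z ^ j\<close> \<open>z \<noteq> 0\<close> have "z ^ (j - i) = 1"
      by simp
    with assms that show False
      by (auto simp: primitive_root_of_unity_def)
  qed
  show ?thesis
    by (rule inj_onI) (metis lessThan_iff neq linorder_neqE_nat)
qed

lemma root_of_unity_eq_primitive_power:
  fixes z a :: "'a::field"
  assumes "primitive_root_of_unity m z" and "0 < m" and "a ^ m = 1"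
  shows "\<exists>k<m. a = z ^ k"
proof -
  have "(z ^ k) ^ m = 1" for k
    using assms(1) by (metis primitive_root_of_unity_def power_mult mult.commute power_one)
  then have sub: "(\<lambda>k. z ^ k) ` {..<m} \<subseteq> {x. x ^ m = 1}"
    by auto
  have "card ((\<lambda>k. z ^ k) ` {..<m}) = m"
    using card_image[OF primitive_root_of_unity_power_inj[OF assms(1)]] by simp
  then have "(\<lambda>k. z ^ k) ` {..<m} = {x. x ^ m = 1}"
    using card_seteq[OF finite_roots_of_unity[OF assms(2)] sub]
      card_roots_of_unity_le[OF assms(2), where 'a='a] by simp
  with assms(3) show ?thesis
    by auto
qed

lemma power_mod_eq_if_power_eq_1:
  fixes z :: "'a::monoid_mult"
  assumes "z ^ m = 1"
  shows "z ^ (n mod m) = z ^ n"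
proof -
  have "z ^ n = (z ^ m) ^ (n div m) * z ^ (n mod m)"
    by (simp flip: power_mult power_add)
  with assms show ?thesis
    by simp
qed

section \<open>A dihedral group of monomial matrices\<close>

definition dihedral_mats :: "nat \<Rightarrow> 'a::field \<Rightarrow> 'a mat2 set" where
  "dihedral_mats m s =
     {(a, 0, 0, d) | a d. a * d = 1 \<and> a ^ m = 1} \<union> {(0, b, c, 0) | b c. b * c = 1 \<and> b ^ m = s}"

lemma mem_dihedral_mats:
  "(a, b, c, d) \<in> dihedral_mats m s \<longleftrightarrow>
     (b = 0 \<and> c = 0 \<and> a * d = 1 \<and> a ^ m = 1) \<or> (a = 0 \<and> d = 0 \<and> b * c = 1 \<and> b ^ m = s)"
  by (auto simp: dihedral_mats_def)

lemma carrier_dihedral_group: "carrier (dihedral_group (2 * m)) = {(k, s). k < m}"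
  by (simp add: dihedral_group_def)

lemma mult_dihedral_group:
  "(k1, s1) \<otimes>\<^bsub>dihedral_group (2 * m)\<^esub> (k2, s2) =
     ((if s1 then k1 + m - k2 else k1 + k2) mod m, s1 \<noteq> s2)"
  by (simp add: dihedral_group_def)

lemma dihedral_group_mult_closed:
  assumes "0 < m" and "x \<in> carrier (dihedral_group (2 * m))" and "y \<in> carrier (dihedral_group (2 * m))"
  shows "x \<otimes>\<^bsub>dihedral_group (2 * m)\<^esub> y \<in> carrier (dihedral_group (2 * m))"
  using assms by (cases x; cases y) (simp add: carrier_dihedral_group mult_dihedral_group)

text \<open>The library lemma iso_sym assumes a group; closure of the domain suffices,
  which spares proving that dihedral_group is one.\<close>
lemma iso_sym_if_mult_closed:
  assumes "h \<in> iso G H"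
    and "\<And>x y. x \<in> carrier G \<Longrightarrow> y \<in> carrier G \<Longrightarrow> x \<otimes>\<^bsub>G\<^esub> y \<in> carrier G"
  shows "H \<cong> G"
proof -
  let ?g = "inv_into (carrier G) h"
  have h: "h \<in> hom G H" "bij_betw h (carrier G) (carrier H)"
    using assms(1) by (auto simp: iso_def)
  then have g: "bij_betw ?g (carrier H) (carrier G)"
    by (simp add: bij_betw_inv_into)
  have g_closed: "?g x \<in> carrier G" if "x \<in> carrier H" for x
    by (meson g bij_betwE that)
  have "?g \<in> hom H G"
  proof (rule homI)
    fix x y assume "x \<in> carrier H" "y \<in> carrier H"
    show "?g (x \<otimes>\<^bsub>H\<^esub> y) = ?g x \<otimes>\<^bsub>G\<^esub> ?g y"
    proof (rule inv_into_f_eq)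
      show "inj_on h (carrier G)"
        using h(2) by (simp add: bij_betw_def)
      show "?g x \<otimes>\<^bsub>G\<^esub> ?g y \<in> carrier G"
        by (simp add: assms(2) g_closed \<open>x \<in> carrier H\<close> \<open>y \<in> carrier H\<close>)
      show "h (?g x \<otimes>\<^bsub>G\<^esub> ?g y) = x \<otimes>\<^bsub>H\<^esub> y"
        using h bij_betw_inv_into_right[of h] g_closed \<open>x \<in> carrier H\<close> \<open>y \<in> carrier H\<close>
        unfolding hom_def by simp
    qed
  qed (rule g_closed)
  with g show ?thesis
    unfolding is_iso_def iso_def by blast
qed

definition dihedral_mat :: "'a::field \<Rightarrow> 'a \<Rightarrow> nat \<times> bool \<Rightarrow> 'a mat2" where
  "dihedral_mat z \<rho> = (\<lambda>(k, s).
     if s then (0, z ^ k * \<rho>, inverse (z ^ k * \<rho>), 0) else (z ^ k, 0, 0, inverse (z ^ k)))"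

lemma dihedral_mat_mult:
  fixes z \<rho> :: "'a::field"
  assumes "0 < m" and "z ^ m = 1" and "\<rho> \<noteq> 0"
    and "x \<in> carrier (dihedral_group (2 * m))" and "y \<in> carrier (dihedral_group (2 * m))"
  shows "dihedral_mat z \<rho> (x \<otimes>\<^bsub>dihedral_group (2 * m)\<^esub> y) =
    mat2_mult (dihedral_mat z \<rho> x) (dihedral_mat z \<rho> y)"
proof -
  obtain k1 s1 k2 s2 where xy: "x = (k1, s1)" "y = (k2, s2)" and "k2 < m"
    using assms(4,5) by (auto simp: carrier_dihedral_group)
  from assms(1,2) have "z \<noteq> 0"
    by (metis power_0_left zero_neq_one neq0_conv)
  have z_add: "z ^ ((k1 + k2) mod m) = z ^ k1 * z ^ k2"
    using power_mod_eq_if_power_eq_1[OF assms(2)] by (simp add: power_add)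
  have "z ^ (k1 + m - k2) * z ^ k2 = z ^ (k1 + m)"
    using \<open>k2 < m\<close> by (simp flip: power_add)
  also have "\<dots> = z ^ k1"
    using assms(2) by (simp add: power_add)
  finally have z_diff: "z ^ ((k1 + m - k2) mod m) = z ^ k1 * inverse (z ^ k2)"
    using power_mod_eq_if_power_eq_1[OF assms(2)] \<open>z \<noteq> 0\<close> by (simp add: field_simps)
  show ?thesis
    unfolding xy mult_dihedral_group dihedral_mat_def using \<open>z \<noteq> 0\<close> \<open>\<rho> \<noteq> 0\<close> z_add z_diff
    by (cases s1; cases s2) (simp_all add: field_simps)
qed

lemma dihedral_mat_inj_on:
  fixes z \<rho> :: "'a::field"
  assumes "primitive_root_of_unity m z" and "\<rho> \<noteq> 0"
  shows "inj_on (dihedral_mat z \<rho>) (carrier (dihedral_group (2 * m)))"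
proof (rule inj_onI)
  fix x y
  assume "x \<in> carrier (dihedral_group (2 * m))" "y \<in> carrier (dihedral_group (2 * m))"
    and eq: "dihedral_mat z \<rho> x = dihedral_mat z \<rho> y"
  then obtain k1 s1 k2 s2 where xy: "x = (k1, s1)" "y = (k2, s2)" and "k1 < m" "k2 < m"
    by (auto simp: carrier_dihedral_group)
  then have "z \<noteq> 0"
    using assms(1) by (auto simp: primitive_root_of_unity_def power_0_left)
  have "z ^ k1 = z ^ k2 \<Longrightarrow> k1 = k2"
    using primitive_root_of_unity_power_inj[OF assms(1)] \<open>k1 < m\<close> \<open>k2 < m\<close> by (auto dest: inj_onD)
  with eq show "x = y"
    unfolding xy dihedral_mat_def using \<open>z \<noteq> 0\<close> \<open>\<rho> \<noteq> 0\<close> by (cases s1; cases s2) auto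
qed

lemma dihedral_mat_image:
  fixes z \<rho> :: "'a::field"
  assumes "0 < m" and z: "primitive_root_of_unity m z" and "\<rho> \<noteq> 0"
  shows "dihedral_mat z \<rho> ` carrier (dihedral_group (2 * m)) = dihedral_mats m (\<rho> ^ m)"
proof
  have "z ^ m = 1"
    using z by (simp add: primitive_root_of_unity_def)
  show "dihedral_mat z \<rho> ` carrier (dihedral_group (2 * m)) \<subseteq> dihedral_mats m (\<rho> ^ m)"
  proof (rule image_subsetI)
    fix x :: "nat \<times> bool"
    obtain k s where x: "x = (k, s)"
      by (cases x)
    have "(z ^ k) ^ m = 1"
      using \<open>z ^ m = 1\<close> by (metis power_mult mult.commute power_one)
    moreover have "z \<noteq> 0"
      using \<open>z ^ m = 1\<close> \<open>0 < m\<close> by (metis power_0_left zero_neq_one neq0_conv)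
    ultimately show "dihedral_mat z \<rho> x \<in> dihedral_mats m (\<rho> ^ m)"
      unfolding x dihedral_mat_def using \<open>\<rho> \<noteq> 0\<close>
      by (auto simp: mem_dihedral_mats power_mult_distrib field_simps)
  qed
  show "dihedral_mats m (\<rho> ^ m) \<subseteq> dihedral_mat z \<rho> ` carrier (dihedral_group (2 * m))"
  proof (rule subsetI)
    fix M
    assume "M \<in> dihedral_mats m (\<rho> ^ m)"
    moreover obtain a b c d where M: "M = (a, b, c, d)"
      by (cases M)
    ultimately consider "b = 0" "c = 0" "a * d = 1" "a ^ m = 1"
      | "a = 0" "d = 0" "b * c = 1" "(b / \<rho>) ^ m = 1"
      using \<open>\<rho> \<noteq> 0\<close> by (auto simp: mem_dihedral_mats power_divide)
    then show "M \<in> dihedral_mat z \<rho> ` carrier (dihedral_group (2 * m))"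
    proof cases
      case 1
      then obtain k where "k < m" "a = z ^ k"
        using root_of_unity_eq_primitive_power[OF z \<open>0 < m\<close>] by blast
      moreover have "d = inverse a"
        using inverse_unique[OF \<open>a * d = 1\<close>] by simp
      ultimately have "M = dihedral_mat z \<rho> (k, False)"
        unfolding M dihedral_mat_def using 1 by simp
      with \<open>k < m\<close> show ?thesis
        by (auto simp: carrier_dihedral_group)
    next
      case 2
      then obtain k where "k < m" "b / \<rho> = z ^ k"
        using root_of_unity_eq_primitive_power[OF z \<open>0 < m\<close>] by blast
      moreover have "c = inverse b"
        using inverse_unique[OF \<open>b * c = 1\<close>] by simp
      ultimately have "M = dihedral_mat z \<rho> (k, True)"
        unfolding M dihedral_mat_def using 2 \<open>\<rho> \<noteq> 0\<close> by (simp add: field_simps)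
      with \<open>k < m\<close> show ?thesis
        by (auto simp: carrier_dihedral_group)
    qed
  qed
qed

lemma dihedral_mats_iso:
  fixes z \<rho> :: "'a::field" and G :: "'a mat2 monoid"
  assumes "0 < m" and z: "primitive_root_of_unity m z" and "\<rho> \<noteq> 0"
    and carrier: "carrier G = dihedral_mats m (\<rho> ^ m)" and mult: "monoid.mult G = mat2_mult"
  shows "G \<cong> dihedral_group (2 * m)"
proof -
  have image: "dihedral_mat z \<rho> ` carrier (dihedral_group (2 * m)) = carrier G"
    unfolding carrier by (rule dihedral_mat_image[OF assms(1-3)])
  have "z ^ m = 1"
    using z by (simp add: primitive_root_of_unity_def)
  then have "dihedral_mat z \<rho> \<in> hom (dihedral_group (2 * m)) G"
    using image dihedral_mat_mult[OF \<open>0 < m\<close> _ \<open>\<rho> \<noteq> 0\<close>] by (auto intro!: homI simp: mult)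
  with image dihedral_mat_inj_on[OF z \<open>\<rho> \<noteq> 0\<close>]
  have "dihedral_mat z \<rho> \<in> iso (dihedral_group (2 * m)) G"
    by (simp add: iso_def bij_betw_def)
  then show ?thesis
    using iso_sym_if_mult_closed dihedral_group_mult_closed[OF \<open>0 < m\<close>] by blast
qed

section \<open>The curve y^2 = x^5 + x^3 + t x\<close>

lemma preserves_quintic_coeffs:
  fixes a b c d t :: "'a::field"
  assumes "preserves_curve [:0, t, 0, 1, 0, 1:] (a, b, c, d)"
  shows "b^5*d + b^3*d^3 + b*d^5*t = 0"
    and "5*a*b^4*d + 3*a*b^2*d^3 + a*d^5*t + b^5*c + 3*b^3*c*d^2 + 5*b*c*d^4*t = (a*d-b*c)^2*t"
    and "10*a^2*b^3*d + 3*a^2*b*d^3 + 5*a*b^4*c + 9*a*b^2*c*d^2 + 5*a*c*d^4*t + 3*b^3*c^2*d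
        + 10*b*c^2*d^3*t = 0"
    and "10*a^3*b^2*d + a^3*d^3 + 10*a^2*b^3*c + 9*a^2*b*c*d^2 + 9*a*b^2*c^2*d
        + 10*a*c^2*d^3*t + b^3*c^3 + 10*b*c^3*d^2*t = (a*d-b*c)^2"
    and "5*a^4*b*d + 10*a^3*b^2*c + 3*a^3*c*d^2 + 9*a^2*b*c^2*d + 3*a*b^2*c^3
        + 10*a*c^3*d^2*t + 5*b*c^4*d*t = 0"
    and "a^5*d + 5*a^4*b*c + 3*a^3*c^2*d + 3*a^2*b*c^3 + 5*a*c^4*d*t + b*c^5*t = (a*d-b*c)^2"
    and "a^5*c + a^3*c^3 + a*c^5*t = 0"
  using assms by (simp_all add: atMost_Suc eval_nat_numeral power_Suc algebra_simps)

lemma quintic_aut_degenerate_cases: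
  fixes a b c d t :: "'a::field"
  assumes "t \<noteq> 0" and "a * d - b * c \<noteq> 0"
    and P: "preserves_curve [:0, t, 0, 1, 0, 1:] (a, b, c, d)"
  shows "c = 0 \<Longrightarrow> b = 0" and "a = 0 \<Longrightarrow> d = 0" and "a \<noteq> 0 \<Longrightarrow> c \<noteq> 0 \<Longrightarrow> d \<noteq> 0"
proof -
  note E = preserves_quintic_coeffs[OF P]
  show "b = 0" if "c = 0"
  proof (rule ccontr)
    assume "b \<noteq> 0"
    have "5 * (a^4*b*d) = 0" "3 * (a^2*b*d^3) + 5 * (2*a^2*b^3*d) = 0"
      using E(5) E(3) \<open>c = 0\<close> by Groebner_Basis.algebra+
    with \<open>b \<noteq> 0\<close> \<open>c = 0\<close> assms(2) show False
      by (auto intro: five_three_contradiction)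
  qed
  show "d = 0" if "a = 0"
  proof (rule ccontr)
    assume "d \<noteq> 0"
    have "5 * (b*c^4*d*t) = 0" "3 * (b^3*c^2*d) + 5 * (2*b*c^2*d^3*t) = 0"
      using E(5) E(3) \<open>a = 0\<close> by Groebner_Basis.algebra+
    with \<open>d \<noteq> 0\<close> \<open>a = 0\<close> assms(1,2) show False
      by (auto intro: five_three_contradiction)
  qed
  show "d \<noteq> 0" if "a \<noteq> 0" "c \<noteq> 0"
  proof
    assume "d = 0"
    have "5 * (a*b^4*c) = 0" "3 * (a*b^2*c^3) + 5 * (2*a^3*b^2*c) = 0"
      using E(3) E(5) \<open>d = 0\<close> by Groebner_Basis.algebra+
    with \<open>d = 0\<close> that assms(2) show False
      by (auto intro: five_three_contradiction)
  qed
qed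

lemma quintic_reduced_system_special_parameter:
  fixes r l t :: "'a::field"
  assumes "r \<noteq> 0" and two: "(2::'a) \<noteq> 0" and five: "(5::'a) \<noteq> 0"
    and t_eq: "t = -(r^4) - r^2"
    and L: "(10*r^2 + 3)*l + r*(10*r^2 + 7) = 0"
    and Q2: "10*r^2*l^3 + 3*r^2*l + 5*r*l^4 + 9*r*l^2 + 5*r*t + 3*l^3 + 10*l*t = 0"
    and Q0: "l^5 + l^3 + l*t = 0"
  shows "4 * t = 1 \<or> 100 * t = 9"
proof -
  txt \<open>Reducing Q2 and Q0 modulo the linear relation L (cofactors found by a Groebner
    basis computation) leaves two polynomials in r alone.\<close>
  have "200*r^3*(4000*r^10+9200*r^8+7760*r^6+2968*r^4+498*r^2+27) = 0"
  proof -
    have "(10*r^2+3)^5 * (10*r^2*l^3 + 3*r^2*l + 5*r*l^4 + 9*r*l^2 + 5*r*t + 3*l^3 + 10*l*t)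
        = 200*r^3*(4000*r^10+9200*r^8+7760*r^6+2968*r^4+498*r^2+27) + ((10*r^2+3)*l
        + r*(10*r^2+7)) * (- 50000*r^12 - 50000*r^11*l + 50000*r^10*l^2 - 170000*r^10
        + 50000*r^9*l^3 + 70000*r^8*l^2 - 185000*r^8 + 60000*r^7*l^3 + 41000*r^7*l
        + 45000*r^6*l^2 - 84200*r^6 + 27000*r^5*l^3 + 21000*r^5*l + 16200*r^4*l^2 - 15945*r^4
        + 5400*r^3*l^3 + 3555*r^3*l + 3105*r^2*l^2 - 945*r^2 + 405*r*l^3 + 162*r*l + 243*l^2)"
      unfolding t_eq by Groebner_Basis.algebra
    then show ?thesis
      using Q2 L by simp
  qed
  moreover have "40*r^3*(4000*r^10+10800*r^8+10960*r^6+5112*r^4+1042*r^2+63) = 0"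
  proof -
    have "(10*r^2+3)^5 * (l^5 + l^3 + l*t) =
        - 40*r^3*(4000*r^10+10800*r^8+10960*r^6+5112*r^4+1042*r^2+63) + ((10*r^2+3)*l
        + r*(10*r^2+7)) * (- 10000*r^11*l + 10000*r^10*l^2 + 16000*r^10 - 10000*r^9*l^3
        - 34000*r^9*l + 10000*r^8*l^4 + 30000*r^8*l^2 + 32000*r^8 - 16000*r^7*l^3
        - 37000*r^7*l + 12000*r^6*l^4 + 26200*r^6*l^2 + 21440*r^6 - 9000*r^5*l^3
        - 16840*r^5*l + 5400*r^4*l^4 + 9600*r^4*l^2 + 5440*r^4 - 2160*r^3*l^3 - 3189*r^3*l
        + 1080*r^2*l^4 + 1521*r^2*l^2 + 360*r^2 - 189*r*l^3 - 189*r*l + 81*l^4 + 81*l^2)"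
      unfolding t_eq by Groebner_Basis.algebra
    then show ?thesis
      using Q0 L by simp
  qed
  moreover have "(2::'a)*2*2*5*5 \<noteq> 0" and "(2::'a)*2*2*5 \<noteq> 0"
    by (intro no_zero_divisors two five)+
  ultimately have P1: "4000*r^10+9200*r^8+7760*r^6+2968*r^4+498*r^2+27 = 0"
    and P2: "4000*r^10+10800*r^8+10960*r^6+5112*r^4+1042*r^2+63 = 0"
    using \<open>r \<noteq> 0\<close> by simp_all
  have "4*((4*t - 1)*(100*t - 9)) = 0"
    using P1 P2 t_eq by Groebner_Basis.algebra
  moreover have "(2::'a)*2 \<noteq> 0"
    by (intro no_zero_divisors two)
  ultimately show ?thesis
    by simp
qed

lemma quintic_system_special_parameter:
  fixes r l t :: "'a::field"
  assumes "r \<noteq> 0" and "l \<noteq> r" and two: "(2::'a) \<noteq> 0"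
    and Q6: "r^5 + r^3 + r*t = 0"
    and Q4: "5*r^4*l + 10*r^3*l^2 + 3*r^3 + 9*r^2*l + 3*r*l^2 + 10*r*t + 5*l*t = 0"
    and Q2: "10*r^2*l^3 + 3*r^2*l + 5*r*l^4 + 9*r*l^2 + 5*r*t + 3*l^3 + 10*l*t = 0"
    and Q0: "l^5 + l^3 + l*t = 0"
  shows "4 * t = 1 \<or> 100 * t = 9"
proof -
  have "r * (r^4 + r^2 + t) = 0"
    using Q6 by Groebner_Basis.algebra
  with \<open>r \<noteq> 0\<close> have "r^4 + r^2 + t = 0"
    by simp
  then have t_eq: "t = -(r^4) - r^2"
    by Groebner_Basis.algebra
  have "r * (l - r) * ((10*r^2 + 3)*l + r*(10*r^2 + 7)) = 0"
    using Q4 t_eq by Groebner_Basis.algebra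
  with \<open>r \<noteq> 0\<close> \<open>l \<noteq> r\<close> have L: "(10*r^2 + 3)*l + r*(10*r^2 + 7) = 0"
    by simp
  have five: "(5::'a) \<noteq> 0"
  proof
    assume "(5::'a) = 0"
    moreover have "3*(l - r) + 5*(2*(r^2*l + r^3 + r)) = 0"
      using L by Groebner_Basis.algebra
    ultimately show False
      using \<open>l \<noteq> r\<close> five_three_contradiction[of 1 "l - r"] by simp
  qed
  show ?thesis
    using quintic_reduced_system_special_parameter[OF \<open>r \<noteq> 0\<close> two five t_eq L Q2 Q0] .
qed

lemma quintic_aut_generic_special_parameter:
  fixes a b c d t :: "'a::field"
  assumes "(2::'a) \<noteq> 0" and "a \<noteq> 0" and "c \<noteq> 0" and "d \<noteq> 0" and "a * d - b * c \<noteq> 0"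
    and P: "preserves_curve [:0, t, 0, 1, 0, 1:] (a, b, c, d)"
  shows "4 * t = 1 \<or> 100 * t = 9"
proof -
  note E = preserves_quintic_coeffs[OF P]
  txt \<open>r and l are the images of infinity and 0 under x |-> (ax+b)/(cx+d); the extreme
    coefficient identities say that both are roots of x^5 + x^3 + t x.\<close>
  define r where "r = a / c"
  define l where "l = b / d"
  have a: "a = r * c" and b: "b = l * d"
    using \<open>c \<noteq> 0\<close> \<open>d \<noteq> 0\<close> by (simp_all add: r_def l_def)
  have "c^6 * (r^5 + r^3 + r*t) = 0"
    using E(7) unfolding a by Groebner_Basis.algebra
  moreover have "c^4*d^2 * (5*r^4*l + 10*r^3*l^2 + 3*r^3 + 9*r^2*l + 3*r*l^2 + 10*r*t + 5*l*t) = 0"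
    using E(5) unfolding a b by Groebner_Basis.algebra
  moreover have "c^2*d^4 * (10*r^2*l^3 + 3*r^2*l + 5*r*l^4 + 9*r*l^2 + 5*r*t + 3*l^3 + 10*l*t) = 0"
    using E(3) unfolding a b by Groebner_Basis.algebra
  moreover have "d^6 * (l^5 + l^3 + l*t) = 0"
    using E(1) unfolding b by Groebner_Basis.algebra
  moreover have "a * d - b * c = c * d * (r - l)"
    unfolding a b by Groebner_Basis.algebra
  ultimately have "r^5 + r^3 + r*t = 0"
    and "5*r^4*l + 10*r^3*l^2 + 3*r^3 + 9*r^2*l + 3*r*l^2 + 10*r*t + 5*l*t = 0"
    and "10*r^2*l^3 + 3*r^2*l + 5*r*l^4 + 9*r*l^2 + 5*r*t + 3*l^3 + 10*l*t = 0"
    and "l^5 + l^3 + l*t = 0" and "l \<noteq> r"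
    using \<open>c \<noteq> 0\<close> \<open>d \<noteq> 0\<close> assms(5) by simp_all
  moreover have "r \<noteq> 0"
    using \<open>a \<noteq> 0\<close> a by auto
  ultimately show ?thesis
    using quintic_system_special_parameter assms(1) by blast
qed

lemma quintic_aut_monomial:
  fixes a b c d t :: "'a::field"
  assumes "(2::'a) \<noteq> 0" and "t \<noteq> 0" and "4 * t \<noteq> 1" and "100 * t \<noteq> 9"
    and "a * d - b * c \<noteq> 0" and P: "preserves_curve [:0, t, 0, 1, 0, 1:] (a, b, c, d)"
  shows "(b = 0 \<and> c = 0) \<or> (a = 0 \<and> d = 0)"
  using quintic_aut_degenerate_cases[OF assms(2,5) P]
    quintic_aut_generic_special_parameter[OF assms(1) _ _ _ assms(5) P] assms(3,4)
  by blast

lemma preserves_quintic_iff_dihedral_mats: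
  fixes a b c d t :: "'a::field"
  assumes "(2::'a) \<noteq> 0" and "t \<noteq> 0" and "4 * t \<noteq> 1" and "100 * t \<noteq> 9"
  shows "a * d - b * c \<noteq> 0 \<and> preserves_curve [:0, t, 0, 1, 0, 1:] (a, b, c, d) \<longleftrightarrow>
    (a, b, c, d) \<in> dihedral_mats 4 t"
proof
  assume "a * d - b * c \<noteq> 0 \<and> preserves_curve [:0, t, 0, 1, 0, 1:] (a, b, c, d)"
  then have det: "a * d - b * c \<noteq> 0" and P: "preserves_curve [:0, t, 0, 1, 0, 1:] (a, b, c, d)"
    by auto
  note E = preserves_quintic_coeffs[OF P]
  from quintic_aut_monomial[OF assms det P] show "(a, b, c, d) \<in> dihedral_mats 4 t"
  proof
    assume "b = 0 \<and> c = 0"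
    with det have "a * d \<noteq> 0"
      by simp
    have "(a*d)^2 * (a*d - 1) = 0" and "(a*d)^2 * (a^3 - d) = 0"
      using E(4) E(6) \<open>b = 0 \<and> c = 0\<close> by Groebner_Basis.algebra+
    with \<open>a * d \<noteq> 0\<close> have "a * d = 1" and "a^3 = d"
      by simp_all
    then have "a ^ 4 = 1"
      by Groebner_Basis.algebra
    with \<open>a * d = 1\<close> \<open>b = 0 \<and> c = 0\<close> show ?thesis
      by (simp add: mem_dihedral_mats)
  next
    assume "a = 0 \<and> d = 0"
    with det have "b * c \<noteq> 0"
      by simp
    have "(b*c)^2 * (b*c - 1) = 0" and "(b*c)^2 * (b^3 - c*t) = 0"
      using E(4) E(2) \<open>a = 0 \<and> d = 0\<close> by Groebner_Basis.algebra+
    with \<open>b * c \<noteq> 0\<close> have "b * c = 1" and "b^3 = c*t"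
      by simp_all
    then have "b ^ 4 = t"
      by Groebner_Basis.algebra
    with \<open>b * c = 1\<close> \<open>a = 0 \<and> d = 0\<close> show ?thesis
      by (simp add: mem_dihedral_mats)
  qed
next
  assume "(a, b, c, d) \<in> dihedral_mats 4 t"
  then consider "b = 0" "c = 0" "a * d = 1" "a ^ 4 = 1" | "a = 0" "d = 0" "b * c = 1" "b ^ 4 = t"
    by (auto simp: mem_dihedral_mats)
  then show "a * d - b * c \<noteq> 0 \<and> preserves_curve [:0, t, 0, 1, 0, 1:] (a, b, c, d)"
  proof cases
    case 1
    then have "d = a^3"
      by Groebner_Basis.algebra
    with 1 show ?thesis
      by (simp add: atMost_Suc eval_nat_numeral) (intro conjI disjI2; Groebner_Basis.algebra)
  next
    case 2
    then show ?thesis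
      by (simp add: atMost_Suc eval_nat_numeral) (intro conjI disjI2; Groebner_Basis.algebra)
  qed
qed

lemma carrier_aut_group_quintic:
  fixes t :: "'a::field"
  assumes "(2::'a) \<noteq> 0" and "t \<noteq> 0" and "4 * t \<noteq> 1" and "100 * t \<noteq> 9"
  shows "carrier (aut_group [:0, t, 0, 1, 0, 1:]) = dihedral_mats 4 t"
proof (rule Set.set_eqI)
  fix M :: "'a mat2"
  obtain a b c d where "M = (a, b, c, d)"
    by (cases M)
  then show "M \<in> carrier (aut_group [:0, t, 0, 1, 0, 1:]) \<longleftrightarrow> M \<in> dihedral_mats 4 t"
    using preserves_quintic_iff_dihedral_mats[OF assms, of a d b c] by (simp add: aut_group_def)
qed

lemma aut_group_quintic_iso_dihedral:
  fixes t r i :: "'a::field"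
  assumes "(2::'a) \<noteq> 0" and "t \<noteq> 0" and "4 * t \<noteq> 1" and "100 * t \<noteq> 9"
    and "r ^ 4 = t" and "i ^ 2 = -1"
  shows "aut_group [:0, t, 0, 1, 0, 1:] \<cong> dihedral_group 8"
proof -
  have "r \<noteq> 0"
    using assms(2,5) by auto
  have "aut_group [:0, t, 0, 1, 0, 1:] \<cong> dihedral_group (2 * 4)"
    by (rule dihedral_mats_iso[OF _ primitive_root_of_unity_4[OF assms(1,6)] \<open>r \<noteq> 0\<close>])
      (simp_all add: carrier_aut_group_quintic[OF assms(1-4)] assms(5), simp add: aut_group_def)
  then show ?thesis
    by simp
qed

section \<open>The curve y^2 = x^6 + x^3 + t\<close>

lemma preserves_sextic_coeffs:
  fixes a b c d t :: "'a::field"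
  assumes "preserves_curve [:t, 0, 0, 1, 0, 0, 1:] (a, b, c, d)"
  shows "b^6 + b^3*d^3 + d^6*t = (a*d-b*c)^2*t"
    and "6*a*b^5 + 3*a*b^2*d^3 + 3*b^3*c*d^2 + 6*c*d^5*t = 0"
    and "15*a^2*b^4 + 3*a^2*b*d^3 + 9*a*b^2*c*d^2 + 3*b^3*c^2*d + 15*c^2*d^4*t = 0"
    and "20*a^3*b^3 + a^3*d^3 + 9*a^2*b*c*d^2 + 9*a*b^2*c^2*d + b^3*c^3 + 20*c^3*d^3*t = (a*d-b*c)^2"
    and "15*a^4*b^2 + 3*a^3*c*d^2 + 9*a^2*b*c^2*d + 3*a*b^2*c^3 + 15*c^4*d^2*t = 0"
    and "6*a^5*b + 3*a^3*c^2*d + 3*a^2*b*c^3 + 6*c^5*d*t = 0"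
    and "a^6 + a^3*c^3 + c^6*t = (a*d-b*c)^2"
  using assms by (simp_all add: atMost_Suc eval_nat_numeral power_Suc algebra_simps)

lemma sextic_aut_degenerate_cases:
  fixes a b c d t :: "'a::field"
  assumes "(2::'a) \<noteq> 0" and "(3::'a) \<noteq> 0" and "t \<noteq> 0" and "a * d - b * c \<noteq> 0"
    and P: "preserves_curve [:t, 0, 0, 1, 0, 0, 1:] (a, b, c, d)"
  shows "c = 0 \<Longrightarrow> b = 0" and "a = 0 \<Longrightarrow> d = 0" and "a \<noteq> 0 \<Longrightarrow> d \<noteq> 0"
proof -
  note E = preserves_sextic_coeffs[OF P]
  have six: "(2::'a) * 3 \<noteq> 0"
    by (intro no_zero_divisors assms(1,2))
  show "b = 0" if "c = 0"
  proof -
    have "2 * 3 * (a^5 * b) = 0"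
      using E(6) \<open>c = 0\<close> by simp
    with six \<open>c = 0\<close> assms(4) show ?thesis
      by auto
  qed
  show "d = 0" if "a = 0"
  proof -
    have "2 * 3 * (c^5 * d * t) = 0"
      using E(6) \<open>a = 0\<close> by simp
    with six \<open>a = 0\<close> assms(3,4) show ?thesis
      by auto
  qed
  show "d \<noteq> 0" if "a \<noteq> 0"
  proof
    assume "d = 0"
    with assms(4) have "b \<noteq> 0"
      by auto
    have "3 * (a^2 * b * (2*a^3 + c^3)) = 0" and "3 * (a * b^2 * (5*a^3 + c^3)) = 0"
      using E(6) E(5) \<open>d = 0\<close> by Groebner_Basis.algebra+
    with assms(2) \<open>a \<noteq> 0\<close> \<open>b \<noteq> 0\<close> have "2*a^3 + c^3 = 0" and "5*a^3 + c^3 = 0"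
      by simp_all
    then have "3 * a^3 = 0"
      by Groebner_Basis.algebra
    with assms(2) \<open>a \<noteq> 0\<close> show False
      by simp
  qed
qed

lemma sextic_reduced_system_special_parameter:
  fixes r l t :: "'a::field"
  assumes "r \<noteq> 0" and two: "(2::'a) \<noteq> 0" and three: "(3::'a) \<noteq> 0"
    and t_rel: "2*t + (2*r^5*l + r^3 + r^2*l) = 0"
    and L: "(10*r^3 + 2)*l + 3*r = 0"
    and B: "10*l^3*r^2 + 10*l^2*r^3 + 2*l^2 + 10*l*r^4 + 8*l*r + 5*r^2 = 0"
    and C: "2*l^4*r + 2*l^3*r^2 + 2*l^2*r^3 + l^2 + 2*l*r^4 + 2*l*r + r^2 = 0"
  shows "4 * t = 1 \<or> 50 * t = -1"
proof -
  txt \<open>Eliminating l from B and C with the linear relation L (Groebner cofactors) leaves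
    a cubic in r^3.\<close>
  have "2*r^3*(10*l^3*r^2 + 10*l^2*r^3 + 2*l^2 + 10*l*r^4 + 8*l*r + 5*r^2)*(10*r^3+2)^3
       - (2*l^4*r + 2*l^3*r^2 + 2*l^2*r^3 + l^2 + 2*l*r^4 + 2*l*r + r^2)*(10*r^3+2)^4
       = 2*r^2*(200*r^9+30*r^6-39*r^3-2) + ((10*r^3+2)*l + 3*r) *
         (- 2000*r^10*l^3 - 800*r^10 - 1000*r^9*l + 200*r^8*l^2 - 1200*r^7*l^3 - 420*r^7
          - 660*r^6*l + 80*r^5*l^2 - 240*r^4*l^3 - 54*r^4 - 132*r^3*l + 8*r^2*l^2 - 16*r*l^3
          - 4*r - 8*l)"
    by Groebner_Basis.algebra
  with B C L have "2 * r^2 * (200*r^9 + 30*r^6 - 39*r^3 - 2) = 0"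
    by simp
  with two \<open>r \<noteq> 0\<close> have cubic: "200*r^9 + 30*r^6 - 39*r^3 - 2 = 0"
    by simp
  have "(4*t - 1)*(10*r^3 + 2) + 2*(2*r^3 + 1)^2
      = 2*(10*r^3 + 2)*(2*t + (2*r^5*l + r^3 + r^2*l)) + ((10*r^3 + 2)*l + 3*r)*(- 4*r^5 - 2*r^2)"
    by Groebner_Basis.algebra
  with t_rel L have E1: "(4*t - 1)*(10*r^3 + 2) + 2*(2*r^3 + 1)^2 = 0"
    by simp
  have "(50*t + 1)*2*(10*r^3 + 2) + 2*(100*r^6 - 35*r^3 - 2)
      = 50*(10*r^3 + 2)*(2*t + (2*r^5*l + r^3 + r^2*l)) + ((10*r^3 + 2)*l + 3*r)*(- 100*r^5 - 50*r^2)"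
    by Groebner_Basis.algebra
  with t_rel L have E2: "(50*t + 1)*2*(10*r^3 + 2) + 2*(100*r^6 - 35*r^3 - 2) = 0"
    by simp
  have "(4*t - 1)*((50*t + 1)*2*(10*r^3 + 2))*(10*r^3 + 2) = 4*(2*r^3 + 1)*(200*r^9 + 30*r^6 - 39*r^3 - 2)"
    using E1 E2 by Groebner_Basis.algebra
  with cubic have "(4*t - 1)*((50*t + 1)*2*(10*r^3 + 2))*(10*r^3 + 2) = 0"
    by simp
  moreover have "10*r^3 + 2 \<noteq> 0"
    using L three \<open>r \<noteq> 0\<close> by auto
  ultimately have "4*t - 1 = 0 \<or> 50*t + 1 = 0"
    using two by (simp only: mult_eq_0_iff) blast
  then show ?thesis
    by (auto simp: eq_neg_iff_add_eq_0)
qed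

lemma sextic_system_special_parameter:
  fixes r l t :: "'a::field"
  assumes "r \<noteq> 0" and "l \<noteq> r" and two: "(2::'a) \<noteq> 0" and three: "(3::'a) \<noteq> 0"
    and F5: "6*r^5*l + 3*r^3 + 3*r^2*l + 6*t = 0"
    and F4: "15*r^4*l^2 + 3*r^3 + 9*r^2*l + 3*r*l^2 + 15*t = 0"
    and F2: "15*r^2*l^4 + 3*r^2*l + 9*r*l^2 + 3*l^3 + 15*t = 0"
    and F1: "6*r*l^5 + 3*r*l^2 + 3*l^3 + 6*t = 0"
  shows "4 * t = 1 \<or> 50 * t = -1"
proof -
  have "3 * (2*t + (2*r^5*l + r^3 + r^2*l)) = 0"
    using F5 by Groebner_Basis.algebra
  with three have t_rel: "2*t + (2*r^5*l + r^3 + r^2*l) = 0"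
    by (metis mult_eq_0_iff)
  have "3 * ((l - r) * r * ((10*r^3 + 2)*l + 3*r)) = 0"
  proof -
    have "2 * (15*r^4*l^2 + 3*r^3 + 9*r^2*l + 3*r*l^2 + 15*t)
        = 3 * ((l - r) * r * ((10*r^3 + 2)*l + 3*r)) + 15 * (2*t + (2*r^5*l + r^3 + r^2*l))"
      by Groebner_Basis.algebra
    with F4 t_rel show ?thesis
      by simp
  qed
  with three \<open>r \<noteq> 0\<close> \<open>l \<noteq> r\<close> have L: "(10*r^3 + 2)*l + 3*r = 0"
    by simp
  have "3 * ((l - r) * (10*l^3*r^2 + 10*l^2*r^3 + 2*l^2 + 10*l*r^4 + 8*l*r + 5*r^2)) = 0"
  proof -
    have "2 * (15*r^2*l^4 + 3*r^2*l + 9*r*l^2 + 3*l^3 + 15*t)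
        = 3 * ((l - r) * (10*l^3*r^2 + 10*l^2*r^3 + 2*l^2 + 10*l*r^4 + 8*l*r + 5*r^2))
          + 15 * (2*t + (2*r^5*l + r^3 + r^2*l))"
      by Groebner_Basis.algebra
    with F2 t_rel show ?thesis
      by simp
  qed
  with three \<open>l \<noteq> r\<close> have B: "10*l^3*r^2 + 10*l^2*r^3 + 2*l^2 + 10*l*r^4 + 8*l*r + 5*r^2 = 0"
    by simp
  have "3 * ((l - r) * (2*l^4*r + 2*l^3*r^2 + 2*l^2*r^3 + l^2 + 2*l*r^4 + 2*l*r + r^2)) = 0"
  proof -
    have "6*r*l^5 + 3*r*l^2 + 3*l^3 + 6*t
        = 3 * ((l - r) * (2*l^4*r + 2*l^3*r^2 + 2*l^2*r^3 + l^2 + 2*l*r^4 + 2*l*r + r^2))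
          + 3 * (2*t + (2*r^5*l + r^3 + r^2*l))"
      by Groebner_Basis.algebra
    with F1 t_rel show ?thesis
      by simp
  qed
  with three \<open>l \<noteq> r\<close> have C: "2*l^4*r + 2*l^3*r^2 + 2*l^2*r^3 + l^2 + 2*l*r^4 + 2*l*r + r^2 = 0"
    by simp
  show ?thesis
    using sextic_reduced_system_special_parameter[OF \<open>r \<noteq> 0\<close> two three t_rel L B C] .
qed

lemma sextic_aut_generic_special_parameter:
  fixes a b c d t :: "'a::field"
  assumes "(2::'a) \<noteq> 0" and "(3::'a) \<noteq> 0" and "a \<noteq> 0" and "c \<noteq> 0" and "d \<noteq> 0"
    and "a * d - b * c \<noteq> 0" and P: "preserves_curve [:t, 0, 0, 1, 0, 0, 1:] (a, b, c, d)"
  shows "4 * t = 1 \<or> 50 * t = -1"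
proof -
  note E = preserves_sextic_coeffs[OF P]
  define r where "r = a / c"
  define l where "l = b / d"
  have a: "a = r * c" and b: "b = l * d"
    using \<open>c \<noteq> 0\<close> \<open>d \<noteq> 0\<close> by (simp_all add: r_def l_def)
  have "c^5*d * (6*r^5*l + 3*r^3 + 3*r^2*l + 6*t) = 0"
    using E(6) unfolding a b by Groebner_Basis.algebra
  moreover have "c^4*d^2 * (15*r^4*l^2 + 3*r^3 + 9*r^2*l + 3*r*l^2 + 15*t) = 0"
    using E(5) unfolding a b by Groebner_Basis.algebra
  moreover have "c^2*d^4 * (15*r^2*l^4 + 3*r^2*l + 9*r*l^2 + 3*l^3 + 15*t) = 0"
    using E(3) unfolding a b by Groebner_Basis.algebra
  moreover have "c*d^5 * (6*r*l^5 + 3*r*l^2 + 3*l^3 + 6*t) = 0"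
    using E(2) unfolding a b by Groebner_Basis.algebra
  moreover have "a * d - b * c = c * d * (r - l)"
    unfolding a b by Groebner_Basis.algebra
  ultimately show ?thesis
    using sextic_system_special_parameter[of r l t] assms(1-6) a by auto
qed

lemma sextic_aut_monomial:
  fixes a b c d t :: "'a::field"
  assumes "(2::'a) \<noteq> 0" and "(3::'a) \<noteq> 0" and "t \<noteq> 0" and "4 * t \<noteq> 1" and "50 * t \<noteq> -1"
    and "a * d - b * c \<noteq> 0" and P: "preserves_curve [:t, 0, 0, 1, 0, 0, 1:] (a, b, c, d)"
  shows "(b = 0 \<and> c = 0) \<or> (a = 0 \<and> d = 0)"
  using sextic_aut_degenerate_cases[OF assms(1-3,6) P]
    sextic_aut_generic_special_parameter[OF assms(1,2) _ _ _ assms(6) P] assms(4,5)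
  by blast

lemma preserves_sextic_iff_dihedral_mats:
  fixes a b c d t :: "'a::field"
  assumes "(2::'a) \<noteq> 0" and "(3::'a) \<noteq> 0" and "t \<noteq> 0" and "4 * t \<noteq> 1" and "50 * t \<noteq> -1"
  shows "a * d - b * c \<noteq> 0 \<and> preserves_curve [:t, 0, 0, 1, 0, 0, 1:] (a, b, c, d) \<longleftrightarrow>
    (a, b, c, d) \<in> dihedral_mats 6 t"
proof
  assume "a * d - b * c \<noteq> 0 \<and> preserves_curve [:t, 0, 0, 1, 0, 0, 1:] (a, b, c, d)"
  then have det: "a * d - b * c \<noteq> 0" and P: "preserves_curve [:t, 0, 0, 1, 0, 0, 1:] (a, b, c, d)"
    by auto
  note E = preserves_sextic_coeffs[OF P]
  from sextic_aut_monomial[OF assms det P] show "(a, b, c, d) \<in> dihedral_mats 6 t"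
  proof
    assume "b = 0 \<and> c = 0"
    with det have "a * d \<noteq> 0"
      by simp
    have "(a*d)^2 * (a*d - 1) = 0" and "a^6 = (a*d)^2"
      using E(4) E(7) \<open>b = 0 \<and> c = 0\<close> by Groebner_Basis.algebra+
    with \<open>a * d \<noteq> 0\<close> \<open>b = 0 \<and> c = 0\<close> show ?thesis
      by (simp add: mem_dihedral_mats)
  next
    assume "a = 0 \<and> d = 0"
    with det have "b * c \<noteq> 0"
      by simp
    have "(b*c)^2 * (b*c - 1) = 0" and "b^6 = (b*c)^2 * t"
      using E(4) E(1) \<open>a = 0 \<and> d = 0\<close> by Groebner_Basis.algebra+
    with \<open>b * c \<noteq> 0\<close> \<open>a = 0 \<and> d = 0\<close> show ?thesis
      by (simp add: mem_dihedral_mats)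
  qed
next
  assume "(a, b, c, d) \<in> dihedral_mats 6 t"
  then consider "b = 0" "c = 0" "a * d = 1" "a ^ 6 = 1" | "a = 0" "d = 0" "b * c = 1" "b ^ 6 = t"
    by (auto simp: mem_dihedral_mats)
  then show "a * d - b * c \<noteq> 0 \<and> preserves_curve [:t, 0, 0, 1, 0, 0, 1:] (a, b, c, d)"
  proof cases
    case 1
    then have "d = a^5"
      by Groebner_Basis.algebra
    with 1 show ?thesis
      by (simp add: atMost_Suc eval_nat_numeral) (intro conjI disjI2; Groebner_Basis.algebra)
  next
    case 2
    then show ?thesis
      by (simp add: atMost_Suc eval_nat_numeral) (intro conjI disjI2; Groebner_Basis.algebra)
  qed
qed

lemma carrier_aut_group_sextic:
  fixes t :: "'a::field"
  assumes "(2::'a) \<noteq> 0" and "(3::'a) \<noteq> 0" and "t \<noteq> 0" and "4 * t \<noteq> 1" and "50 * t \<noteq> -1"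
  shows "carrier (aut_group [:t, 0, 0, 1, 0, 0, 1:]) = dihedral_mats 6 t"
proof (rule Set.set_eqI)
  fix M :: "'a mat2"
  obtain a b c d where "M = (a, b, c, d)"
    by (cases M)
  then show "M \<in> carrier (aut_group [:t, 0, 0, 1, 0, 0, 1:]) \<longleftrightarrow> M \<in> dihedral_mats 6 t"
    using preserves_sextic_iff_dihedral_mats[OF assms, of a d b c] by (simp add: aut_group_def)
qed

lemma aut_group_sextic_iso_dihedral:
  fixes t r z :: "'a::field"
  assumes "(2::'a) \<noteq> 0" and "(3::'a) \<noteq> 0" and "t \<noteq> 0" and "4 * t \<noteq> 1" and "50 * t \<noteq> -1"
    and "r ^ 6 = t" and "z ^ 2 - z + 1 = 0"
  shows "aut_group [:t, 0, 0, 1, 0, 0, 1:] \<cong> dihedral_group 12"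
proof -
  have "r \<noteq> 0"
    using assms(3,6) by auto
  have "aut_group [:t, 0, 0, 1, 0, 0, 1:] \<cong> dihedral_group (2 * 6)"
    by (rule dihedral_mats_iso[OF _ primitive_root_of_unity_6[OF assms(1,2,7)] \<open>r \<noteq> 0\<close>])
      (simp_all add: carrier_aut_group_sextic[OF assms(1-5)] assms(6), simp add: aut_group_def)
  then show ?thesis
    by simp
qed

theorem mainTheorem1:
  fixes dummy :: "'a::{finite, field}"
  shows
   "(\<forall>t::'a. odd CARD('a) \<and> t \<noteq> 0 \<and> t \<noteq> 1/4 \<and> t \<noteq> 9/100
        \<and> 4 dvd (CARD('a) - 1) \<and> (\<exists>r::'a. r ^ 4 = t)
      \<longrightarrow> aut_group [:0, t, 0, 1, 0, 1:] \<cong> dihedral_group 8)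
  \<and> (\<forall>t::'a. odd CARD('a) \<and> \<not> 3 dvd CARD('a) \<and> t \<noteq> 0 \<and> t \<noteq> 1/4 \<and> t \<noteq> -1/50
        \<and> 3 dvd (CARD('a) - 1) \<and> (\<exists>r::'a. r ^ 6 = t)
      \<longrightarrow> aut_group [:t, 0, 0, 1, 0, 0, 1:] \<cong> dihedral_group 12)"
proof -
  have two: "(2::'a) \<noteq> 0" if "odd CARD('a)"
    using of_nat_neq_0_if_prime_not_dvd_card[where 'a='a, of 2] that by simp
  have three: "(3::'a) \<noteq> 0" if "\<not> 3 dvd CARD('a)"
    using of_nat_neq_0_if_prime_not_dvd_card[where 'a='a, of 3] that by simp
  show ?thesis
  proof (intro conjI allI impI; elim conjE exE)
    fix t r :: 'a
    assume "odd CARD('a)" "t \<noteq> 0" "t \<noteq> 1/4" "t \<noteq> 9/100" "4 dvd (CARD('a) - 1)" "r ^ 4 = t"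
    moreover obtain i :: 'a where "i ^ 2 = -1"
      using exists_sqrt_minus_1 \<open>4 dvd (CARD('a) - 1)\<close> by blast
    ultimately show "aut_group [:0, t, 0, 1, 0, 1:] \<cong> dihedral_group 8"
      using aut_group_quintic_iso_dihedral two mult_neq_if_neq_divide[of t 1 4]
        mult_neq_if_neq_divide[of t 9 100] nine_or_hundred_neq_0 by auto
  next
    fix t r :: 'a
    assume "odd CARD('a)" "\<not> 3 dvd CARD('a)" "t \<noteq> 0" "t \<noteq> 1/4" "t \<noteq> -1/50"
      "3 dvd (CARD('a) - 1)" "r ^ 6 = t"
    moreover obtain z :: 'a where "z ^ 2 - z + 1 = 0"
      using exists_root_x2_minus_x_plus_1 \<open>3 dvd (CARD('a) - 1)\<close> by blast
    ultimately show "aut_group [:t, 0, 0, 1, 0, 0, 1:] \<cong> dihedral_group 12"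
      using aut_group_sextic_iso_dihedral two three mult_neq_if_neq_divide[of t 1 4]
        mult_neq_if_neq_divide[of t "-1" 50] by auto
  qed
qed

end
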